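(* Let $P^G=\{p^G(o_1o_2o_3|i_1i_2i_3)\}$ be the tripartite correlation defined in the context. Then there exist a finite set $\Lambda$, a probability distribution $(p_\lambda)_{\lambda\in\Lambda}$, single-party conditional distributions $p(o_1|i_1,\lambda)$, and bipartite conditional distributions $p_{2\leftarrow3}(o_2o_3|i_2i_3,\lambda)$ satisfying, for every $\lambda$, every $i_3,o_3$ and every $i_2,i_2'$, $$\sum_{o_2}p_{2\leftarrow3}(o_2o_3|i_2i_3,\lambda)=\sum_{o_2}p_{2\leftarrow3}(o_2o_3|i_2'i_3,\lambda)$$ (i.e. no signaling from party 2 to party 3; signaling from 3 to 2 is allowed), such that $$p^G(o_1o_2o_3|i_1i_2i_3)=\sum_{\lambda\in\Lambda}p_\lambda\, p(o_1|i_1,\lambda)\,p_{2\leftarrow3}(o_2o_3|i_2i_3,\lambda)$$ for all inputs and outputs. In particular, $P^G$ admits a bilocal decomposition with respect to the partition $1|23$ in which no term displays signaling in both directions.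
   Context: Three parties; party $k\in\{1,2,3\}$ has input $i_k\in\{0,1\}$ and output $o_k\in\{0,1\}$. A tripartite correlation is a family of conditional probability distributions $p(o_1o_2o_3|i_1i_2i_3)$. Let $a^{\pm}=\frac14\left(1\pm\frac{1}{\sqrt2}\right)$. The correlation $P^G$ is given by the following matrix, whose rows are indexed by $(i_1i_2i_3)$ and columns by $(o_1o_2o_3)$, both in lexicographic order $000,001,010,011,100,101,110,111$: $$P^G=\frac12\begin{pmatrix} 2a^+&2a^-&0&0&0&0&2a^-&2a^+\\ 2a^+&2a^-&0&0&0&0&2a^-&2a^+\\ a^+&a^-&a^+&a^-&a^-&a^+&a^-&a^+\\ a^+&a^-&a^+&a^-&a^-&a^+&a^-&a^+\\ a^+&a^-&a^-&a^+&a^+&a^-&a^-&a^+\\ a^+&a^-&a^-&a^+&a^+&a^-&a^-&a^+\\ a^+&a^-&a^-&a^+&a^-&a^+&a^+&a^-\\ a^-&a^+&a^+&a^-&a^+&a^-&a^-&a^+ \end{pmatrix}.$$ (It is the quantum correlation obtained from the state $\frac{1}{\sqrt2}(|000\rangle+|111\rangle)$ when parties 1 and 2 measure $\sigma_z$ on input 0 and $\sigma_x$ on input 1, party 3 measures $(\sigma_z+\sigma_x)/\sqrt2$ on input 0 and $(\sigma_z-\sigma_x)/\sqrt2$ on input 1, and outcome $+1$ is recorded as 0, $-1$ as 1.) *)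

theory Defs
  imports Complex_Main
begin

definition a_plus :: real where "a_plus = (1 + 1 / sqrt 2) / 4"
definition a_minus :: real where "a_minus = (1 - 1 / sqrt 2) / 4"

definition bit :: "bool \<Rightarrow> nat" where "bit b = (if b then 1 else 0)"

(* the matrix of P^G (without the overall factor 1/2), rows indexed by i1i2i3,
   columns by o1o2o3, both in lexicographic order 000,...,111 *)
definition PG_table :: "real list list" where
  "PG_table =
   [[2*a_plus, 2*a_minus, 0, 0, 0, 0, 2*a_minus, 2*a_plus],
    [2*a_plus, 2*a_minus, 0, 0, 0, 0, 2*a_minus, 2*a_plus],
    [a_plus, a_minus, a_plus, a_minus, a_minus, a_plus, a_minus, a_plus],
    [a_plus, a_minus, a_plus, a_minus, a_minus, a_plus, a_minus, a_plus],
    [a_plus, a_minus, a_minus, a_plus, a_plus, a_minus, a_minus, a_plus],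
    [a_plus, a_minus, a_minus, a_plus, a_plus, a_minus, a_minus, a_plus],
    [a_plus, a_minus, a_minus, a_plus, a_minus, a_plus, a_plus, a_minus],
    [a_minus, a_plus, a_plus, a_minus, a_plus, a_minus, a_minus, a_plus]]"

definition pG :: "bool \<Rightarrow> bool \<Rightarrow> bool \<Rightarrow> bool \<Rightarrow> bool \<Rightarrow> bool \<Rightarrow> real" where
  "pG o1 o2 o3 i1 i2 i3 =
     (1/2) * (PG_table ! (4 * bit i1 + 2 * bit i2 + bit i3)) ! (4 * bit o1 + 2 * bit o2 + bit o3)"

end

theory Submission
  imports Defs "HOL-Library.Countable"
begin

(*
  The hidden variable is a quadruple of bits (s, c, m, n): s and c are
  uniform, m and n are independent flips of probability 2 a_minus = sin^2(pi/8). Party 1 outputs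
  s on input 0 and c on input 1. Party 3 outputs s xor m whatever its input, so nothing flows from
  party 2 to party 3. Party 2 outputs s on input 0 and s xor m xor c xor i3 xor n on input 1; the
  dependence on i3 is the permitted signalling from 3 to 2. Checking the 64 entries of P^G is then
  a finite computation; finally the hidden variable is moved into nat by a countable encoding.
*)

definition one_way_bilocal_model ::
  "(bool \<Rightarrow> bool \<Rightarrow> bool \<Rightarrow> bool \<Rightarrow> bool \<Rightarrow> bool \<Rightarrow> real) \<Rightarrow> 'h set \<Rightarrow> ('h \<Rightarrow> real) \<Rightarrow>
    (bool \<Rightarrow> bool \<Rightarrow> 'h \<Rightarrow> real) \<Rightarrow> (bool \<Rightarrow> bool \<Rightarrow> bool \<Rightarrow> bool \<Rightarrow> 'h \<Rightarrow> real) \<Rightarrow> bool"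
where
  "one_way_bilocal_model P \<Lambda> pl p1 p23 \<longleftrightarrow>
    finite \<Lambda> \<and>
    (\<forall>l\<in>\<Lambda>. pl l \<ge> 0) \<and> (\<Sum>l\<in>\<Lambda>. pl l) = 1 \<and>
    (\<forall>l\<in>\<Lambda>. \<forall>o1 i1. p1 o1 i1 l \<ge> 0) \<and>
    (\<forall>l\<in>\<Lambda>. \<forall>i1. (\<Sum>o1\<in>UNIV. p1 o1 i1 l) = 1) \<and>
    (\<forall>l\<in>\<Lambda>. \<forall>o2 o3 i2 i3. p23 o2 o3 i2 i3 l \<ge> 0) \<and>
    (\<forall>l\<in>\<Lambda>. \<forall>i2 i3. (\<Sum>o2\<in>UNIV. \<Sum>o3\<in>UNIV. p23 o2 o3 i2 i3 l) = 1) \<and>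
    (\<forall>l\<in>\<Lambda>. \<forall>i3 o3 i2 i2'.
        (\<Sum>o2\<in>UNIV. p23 o2 o3 i2 i3 l) = (\<Sum>o2\<in>UNIV. p23 o2 o3 i2' i3 l)) \<and>
    (\<forall>o1 o2 o3 i1 i2 i3.
        P o1 o2 o3 i1 i2 i3 = (\<Sum>l\<in>\<Lambda>. pl l * p1 o1 i1 l * p23 o2 o3 i2 i3 l))"

lemma one_way_bilocal_model_nat:
  fixes \<Lambda> :: "'h::countable set"
  assumes "one_way_bilocal_model P \<Lambda> pl p1 p23"
  shows "\<exists>(\<Lambda>' :: nat set) pl' p1' p23'. one_way_bilocal_model P \<Lambda>' pl' p1' p23'"
proof -
  have "one_way_bilocal_model P (to_nat ` \<Lambda>) (pl \<circ> from_nat)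
          (\<lambda>o1 i1. p1 o1 i1 \<circ> from_nat) (\<lambda>o2 o3 i2 i3. p23 o2 o3 i2 i3 \<circ> from_nat)"
    using assms unfolding one_way_bilocal_model_def by (simp add: sum.reindex inj_on_def)
  then show ?thesis
    by blast
qed

lemma sum_UNIV_prod:
  "(\<Sum>x\<in>(UNIV :: ('a::finite \<times> 'b::finite) set). f x) = (\<Sum>a\<in>UNIV. \<Sum>b\<in>UNIV. f (a, b))"
  by (simp add: sum.cartesian_product flip: UNIV_Times_UNIV)

lemma sum_UNIV_bool: "(\<Sum>b\<in>UNIV. f b) = f False + f True"
  by (simp add: UNIV_bool)

lemma a_plus_nonneg: "a_plus \<ge> 0"
  unfolding a_plus_def by simp

lemma a_minus_nonneg: "a_minus \<ge> 0"
  unfolding a_minus_def by simp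

lemma a_minus_eq: "a_minus = 1/2 - a_plus"
  unfolding a_minus_def a_plus_def by (simp add: field_simps)

definition flip_prob :: "bool \<Rightarrow> real" where
  "flip_prob b = (if b then 2 * a_minus else 2 * a_plus)"

definition pG_weight :: "bool \<times> bool \<times> bool \<times> bool \<Rightarrow> real" where
  "pG_weight = (\<lambda>(s, c, m, n). flip_prob m * flip_prob n / 4)"

definition pG_party1 :: "bool \<Rightarrow> bool \<Rightarrow> bool \<times> bool \<times> bool \<times> bool \<Rightarrow> real" where
  "pG_party1 o1 i1 = (\<lambda>(s, c, m, n). of_bool (o1 = (if i1 then c else s)))"

definition pG_party23 :: "bool \<Rightarrow> bool \<Rightarrow> bool \<Rightarrow> bool \<Rightarrow> bool \<times> bool \<times> bool \<times> bool \<Rightarrow> real" where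
  "pG_party23 o2 o3 i2 i3 = (\<lambda>(s, c, m, n).
     of_bool (o3 = (s \<noteq> m)) *
     of_bool (o2 = (if i2 then (s \<noteq> m) \<noteq> (c \<noteq> (i3 \<noteq> n)) else s)))"

lemma flip_prob_nonneg: "flip_prob b \<ge> 0"
  by (simp add: flip_prob_def a_plus_nonneg a_minus_nonneg)

lemma flip_prob_sum: "flip_prob False + flip_prob True = 1"
  by (simp add: flip_prob_def a_minus_eq)

lemma pG_weight_nonneg: "pG_weight h \<ge> 0"
  by (simp add: pG_weight_def flip_prob_nonneg split: prod.split)

lemma sum_pG_weight: "(\<Sum>h\<in>UNIV. pG_weight h) = 1"
proof -
  have "(\<Sum>h\<in>UNIV. pG_weight h) = (flip_prob False + flip_prob True)\<^sup>2"
    unfolding sum_UNIV_prod sum_UNIV_bool pG_weight_def by (simp add: power2_eq_square algebra_simps)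
  then show ?thesis
    by (simp add: flip_prob_sum)
qed

lemma pG_party23_marginal_3:
  "(\<Sum>o2\<in>UNIV. pG_party23 o2 o3 i2 i3 (s, c, m, n)) = of_bool (o3 = (s \<noteq> m))"
  by (simp add: sum_UNIV_bool pG_party23_def)

lemma pG_eq_hidden_sum:
  "pG o1 o2 o3 i1 i2 i3 =
     (\<Sum>h\<in>UNIV. pG_weight h * pG_party1 o1 i1 h * pG_party23 o2 o3 i2 i3 h)"
  unfolding sum_UNIV_prod sum_UNIV_bool
  by (cases o1; cases o2; cases o3; cases i1; cases i2; cases i3;
      simp add: pG_def PG_table_def bit_def pG_weight_def pG_party1_def pG_party23_def
        flip_prob_def a_minus_eq field_simps)

lemma pG_one_way_bilocal:
  "one_way_bilocal_model pG UNIV pG_weight pG_party1 pG_party23"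
  unfolding one_way_bilocal_model_def
  by (simp add: pG_weight_nonneg sum_pG_weight pG_party1_def pG_party23_def sum_UNIV_bool
      pG_party23_marginal_3 pG_eq_hidden_sum split: prod.split)

theorem proposition1:
  shows "\<exists>(\<Lambda> :: nat set) (pl :: nat \<Rightarrow> real)
            (p1 :: bool \<Rightarrow> bool \<Rightarrow> nat \<Rightarrow> real)
            (p23 :: bool \<Rightarrow> bool \<Rightarrow> bool \<Rightarrow> bool \<Rightarrow> nat \<Rightarrow> real).
    finite \<Lambda> \<and>
    (\<forall>l\<in>\<Lambda>. pl l \<ge> 0) \<and> (\<Sum>l\<in>\<Lambda>. pl l) = 1 \<and>
    (\<forall>l\<in>\<Lambda>. \<forall>o1 i1. p1 o1 i1 l \<ge> 0) \<and>
    (\<forall>l\<in>\<Lambda>. \<forall>i1. (\<Sum>o1\<in>UNIV. p1 o1 i1 l) = 1) \<and>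
    (\<forall>l\<in>\<Lambda>. \<forall>o2 o3 i2 i3. p23 o2 o3 i2 i3 l \<ge> 0) \<and>
    (\<forall>l\<in>\<Lambda>. \<forall>i2 i3. (\<Sum>o2\<in>UNIV. \<Sum>o3\<in>UNIV. p23 o2 o3 i2 i3 l) = 1) \<and>
    (\<forall>l\<in>\<Lambda>. \<forall>i3 o3 i2 i2'.
        (\<Sum>o2\<in>UNIV. p23 o2 o3 i2 i3 l) = (\<Sum>o2\<in>UNIV. p23 o2 o3 i2' i3 l)) \<and>
    (\<forall>o1 o2 o3 i1 i2 i3.
        pG o1 o2 o3 i1 i2 i3 = (\<Sum>l\<in>\<Lambda>. pl l * p1 o1 i1 l * p23 o2 o3 i2 i3 l))"
  using one_way_bilocal_model_nat[OF pG_one_way_bilocal]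
  unfolding one_way_bilocal_model_def .

end
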